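(* Rewriting in the free $3$-category $\mathbf{Toff}$ of reversible Boolean circuits terminates: there is no infinite sequence $\alpha_1,\alpha_2,\dots$ of non-identity $3$-cells of $\mathbf{Toff}$ with ${\tt t}_2(\alpha_i)={\tt s}_2(\alpha_{i+1})$ for all $i$; equivalently, every sequence of reductions of circuits by the rules of $R_3$ (applied in any context, modulo the $3$-category axioms) is finite.
   Context: $\mathbf{Toff}$ is the free strict $3$-category generated by: one $0$-cell $\ast$; one $1$-generator, the wire $1:\ast\to\ast$ (so $1$-cells are bundles of $n$ wires); four $2$-generators (gates) $s:2\Rightarrow2$ (SWAP), $N:1\Rightarrow1$ (NOT), $T_2:2\Rightarrow2$ (controlled NOT), $T_3:3\Rightarrow3$ (Toffoli), so that $2$-cells are circuits built from these gates by parallel and sequential composition; and the set $R_3$ of $3$-generators (rewriting rules) listed below. Write $\star_0$ for parallel composition (left to right), $\star_1$ for sequential composition (diagrammatic order), $1$ also for the identity $2$-cell on one wire and $\mathrm{id}_n$ for the identity $2$-cell on $n$ wires. Let $L_3=(s\star_01)\star_1(1\star_0s)$, $L_4=(s\star_01\star_01)\star_1(1\star_0s\star_01)\star_1(1\star_01\star_0s)$, $L'_3=(1\star_0s)\star_1(s\star_01)$, $L'_4=(1\star_01\star_0s)\star_1(1\star_0s\star_01)\star_1(s\star_01\star_01)$. $R_3$ consists of: permutation rules $s\star_1s\Rrightarrow\mathrm{id}_2$ and $(s\star_01)\star_1(1\star_0s)\star_1(s\star_01)\Rrightarrow(1\star_0s)\star_1(s\star_01)\star_1(1\star_0s)$;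 annihilation rules $N\star_1N\Rrightarrow\mathrm{id}_1$, $T_2\star_1T_2\Rrightarrow\mathrm{id}_2$, $T_3\star_1T_3\Rrightarrow\mathrm{id}_3$; sliding rules $s\star_1(N\star_01)\Rrightarrow(1\star_0N)\star_1s$, $s\star_1(1\star_0N)\Rrightarrow(N\star_01)\star_1s$, $L_3\star_1(T_2\star_01)\Rrightarrow(1\star_0T_2)\star_1L_3$, $L'_3\star_1(1\star_0T_2)\Rrightarrow(T_2\star_01)\star_1L'_3$, $L_4\star_1(T_3\star_01)\Rrightarrow(1\star_0T_3)\star_1L_4$, $L'_4\star_1(1\star_0T_3)\Rrightarrow(T_3\star_01)\star_1L'_4$; and the swapped Toffoli rule $(s\star_01)\star_1T_3\Rrightarrow T_3\star_1(s\star_01)$. $3$-cells of $\mathbf{Toff}$ are formal $\star_0,\star_1,\star_2$-composites of these rules and identities, taken modulo the strict $3$-category axioms (associativity, local units, exchange); $2$-cells are likewise taken modulo these axioms. *)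

theory Defs
  imports Main
begin

datatype gate = SWAP | NOT | CNOT | TOFF

fun arity :: "gate \<Rightarrow> nat" where
  "arity SWAP = 2" | "arity NOT = 1" | "arity CNOT = 2" | "arity TOFF = 3"

text \<open>A 2-cell (circuit) on n wires is represented by n together with a word of
  whiskered gates: an occurrence (g, p) stands for id_p *0 g *0 id_(n - p - arity g);
  the word is read in diagrammatic order (first element is applied first).
  2-cells of the free strict 2-category are such words modulo the exchange law,
  i.e. modulo swapping adjacent occurrences acting on disjoint sets of wires.\<close>
type_synonym circ = "nat \<times> (gate \<times> nat) list"

definition wf_circ :: "circ \<Rightarrow> bool" where
  "wf_circ c \<longleftrightarrow> (\<forall>(g, p) \<in> set (snd c). p + arity g \<le> fst c)"

definition idc :: "nat \<Rightarrow> circ" where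
  "idc n = (n, [])"

definition gc :: "gate \<Rightarrow> circ" where
  "gc g = (arity g, [(g, 0)])"

definition shift :: "nat \<Rightarrow> (gate \<times> nat) list \<Rightarrow> (gate \<times> nat) list" where
  "shift m w = map (\<lambda>(g, p). (g, p + m)) w"

definition comp0 :: "circ \<Rightarrow> circ \<Rightarrow> circ" (infixl "\<star>\<^sub>0" 70) where
  "c \<star>\<^sub>0 d = (fst c + fst d, snd c @ shift (fst c) (snd d))"

text \<open>Sequential composition (diagrammatic order); only used on circuits with the
  same number of wires.\<close>
definition comp1 :: "circ \<Rightarrow> circ \<Rightarrow> circ" (infixl "\<star>\<^sub>1" 65) where
  "c \<star>\<^sub>1 d = (fst c, snd c @ snd d)"

definition indep :: "gate \<times> nat \<Rightarrow> gate \<times> nat \<Rightarrow> bool" where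
  "indep x y \<longleftrightarrow> snd x + arity (fst x) \<le> snd y \<or> snd y + arity (fst y) \<le> snd x"

inductive exch :: "circ \<Rightarrow> circ \<Rightarrow> bool" where
  "indep x y \<Longrightarrow> exch (n, u @ [x, y] @ v) (n, u @ [y, x] @ v)"

definition circ_eq :: "circ \<Rightarrow> circ \<Rightarrow> bool" (infix "\<approx>" 50) where
  "c \<approx> d \<longleftrightarrow> equivclp exch c d"

definition s :: circ where "s = gc SWAP"
definition N :: circ where "N = gc NOT"
definition T2 :: circ where "T2 = gc CNOT"
definition T3 :: circ where "T3 = gc TOFF"
definition one :: circ where "one = idc 1"

definition L3 :: circ where "L3 = (s \<star>\<^sub>0 one) \<star>\<^sub>1 (one \<star>\<^sub>0 s)"
definition L4 :: circ where
  "L4 = (s \<star>\<^sub>0 one \<star>\<^sub>0 one) \<star>\<^sub>1 (one \<star>\<^sub>0 s \<star>\<^sub>0 one) \<star>\<^sub>1 (one \<star>\<^sub>0 one \<star>\<^sub>0 s)"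
definition L3' :: circ where "L3' = (one \<star>\<^sub>0 s) \<star>\<^sub>1 (s \<star>\<^sub>0 one)"
definition L4' :: circ where
  "L4' = (one \<star>\<^sub>0 one \<star>\<^sub>0 s) \<star>\<^sub>1 (one \<star>\<^sub>0 s \<star>\<^sub>0 one) \<star>\<^sub>1 (s \<star>\<^sub>0 one \<star>\<^sub>0 one)"

definition R3 :: "(circ \<times> circ) set" where
  "R3 = {
    (s \<star>\<^sub>1 s, idc 2),
    ((s \<star>\<^sub>0 one) \<star>\<^sub>1 (one \<star>\<^sub>0 s) \<star>\<^sub>1 (s \<star>\<^sub>0 one),
       (one \<star>\<^sub>0 s) \<star>\<^sub>1 (s \<star>\<^sub>0 one) \<star>\<^sub>1 (one \<star>\<^sub>0 s)),
    (N \<star>\<^sub>1 N, idc 1),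
    (T2 \<star>\<^sub>1 T2, idc 2),
    (T3 \<star>\<^sub>1 T3, idc 3),
    (s \<star>\<^sub>1 (N \<star>\<^sub>0 one), (one \<star>\<^sub>0 N) \<star>\<^sub>1 s),
    (s \<star>\<^sub>1 (one \<star>\<^sub>0 N), (N \<star>\<^sub>0 one) \<star>\<^sub>1 s),
    (L3 \<star>\<^sub>1 (T2 \<star>\<^sub>0 one), (one \<star>\<^sub>0 T2) \<star>\<^sub>1 L3),
    (L3' \<star>\<^sub>1 (one \<star>\<^sub>0 T2), (T2 \<star>\<^sub>0 one) \<star>\<^sub>1 L3'),
    (L4 \<star>\<^sub>1 (T3 \<star>\<^sub>0 one), (one \<star>\<^sub>0 T3) \<star>\<^sub>1 L4),
    (L4' \<star>\<^sub>1 (one \<star>\<^sub>0 T3), (T3 \<star>\<^sub>0 one) \<star>\<^sub>1 L4'),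
    ((s \<star>\<^sub>0 one) \<star>\<^sub>1 T3, T3 \<star>\<^sub>1 (s \<star>\<^sub>0 one))
  }"

text \<open>One-step reduction of 2-cells: apply a rule in an arbitrary context
  u *1 (id_a *0 l *0 id_b) *1 v, modulo the 2-category axioms.  Every
  non-identity 3-cell of Toff is a composite of such steps.\<close>
definition red :: "circ \<Rightarrow> circ \<Rightarrow> bool" where
  "red c d \<longleftrightarrow> (\<exists>l r a b u v.
      (l, r) \<in> R3 \<and> wf_circ u \<and> wf_circ v \<and>
      fst u = a + fst l + b \<and> fst v = a + fst l + b \<and>
      c \<approx> u \<star>\<^sub>1 (idc a \<star>\<^sub>0 l \<star>\<^sub>0 idc b) \<star>\<^sub>1 v \<and>
      d \<approx> u \<star>\<^sub>1 (idc a \<star>\<^sub>0 r \<star>\<^sub>0 idc b) \<star>\<^sub>1 v)"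

end

theory Submission
  imports Defs
begin

text \<open>Every reduction strictly decreases, lexicographically, four quantities:
  the number of non-swap gates (annihilation of N, T2, T3); the number of swaps
  (annihilation of s); the sum, over all swaps, of their distance from the last wire
  (the Yang-Baxter rule moves two swaps one wire down and only one swap one wire up); and a cost
  that drops when a gate slides to the left through swaps.  For the cost, every wire
  carries a height, which a swap raises on both its wires to one more than the larger of
  the two; a non-swap gate costs the total height of its wires.  A sliding rule does not
  change the heights it leaves behind but moves its gate before swaps, so the gate meets
  strictly lower heights.  All four quantities are invariant under exchanging
  independent gates, hence are functions of 2-cells.\<close>

lemma equivclp_invariant:
  assumes "\<And>x y. r x y \<Longrightarrow> f x = f y" and "equivclp r a b"
  shows "f a = f b"
  using assms(2) by (induction rule: equivclp_induct) (auto dest: assms(1))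

lemma shift_simps [simp]:
  "shift a [] = []"
  "shift a (x # w) = (fst x, snd x + a) # shift a w"
  by (auto simp: shift_def split: prod.splits)

lemma R3_explicit: "R3 = {
  ((2, [(SWAP,0),(SWAP,0)]), (2, [])),
  ((3, [(SWAP,0),(SWAP,1),(SWAP,0)]), (3, [(SWAP,1),(SWAP,0),(SWAP,1)])),
  ((1, [(NOT,0),(NOT,0)]), (1, [])),
  ((2, [(CNOT,0),(CNOT,0)]), (2, [])),
  ((3, [(TOFF,0),(TOFF,0)]), (3, [])),
  ((2, [(SWAP,0),(NOT,0)]), (2, [(NOT,1),(SWAP,0)])),
  ((2, [(SWAP,0),(NOT,1)]), (2, [(NOT,0),(SWAP,0)])),
  ((3, [(SWAP,0),(SWAP,1),(CNOT,0)]), (3, [(CNOT,1),(SWAP,0),(SWAP,1)])),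
  ((3, [(SWAP,1),(SWAP,0),(CNOT,1)]), (3, [(CNOT,0),(SWAP,1),(SWAP,0)])),
  ((4, [(SWAP,0),(SWAP,1),(SWAP,2),(TOFF,0)]), (4, [(TOFF,1),(SWAP,0),(SWAP,1),(SWAP,2)])),
  ((4, [(SWAP,2),(SWAP,1),(SWAP,0),(TOFF,1)]), (4, [(TOFF,0),(SWAP,2),(SWAP,1),(SWAP,0)])),
  ((3, [(SWAP,0),(TOFF,0)]), (3, [(TOFF,0),(SWAP,0)]))}"
  unfolding R3_def L3_def L4_def L3'_def L4'_def s_def N_def T2_def T3_def one_def gc_def idc_def
  by (simp add: comp0_def comp1_def numeral_eq_Suc)

lemma red_imp_rule_in_context:
  assumes "red c d"
  obtains l r n a b U V where "(l, r) \<in> R3" and "n = a + fst l + b"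
    and "c \<approx> (n, U @ shift a (snd l) @ V)" and "d \<approx> (n, U @ shift a (snd r) @ V)"
proof -
  from assms obtain l r a b u v where "(l, r) \<in> R3" "fst u = a + fst l + b"
    "c \<approx> u \<star>\<^sub>1 (idc a \<star>\<^sub>0 l \<star>\<^sub>0 idc b) \<star>\<^sub>1 v"
    "d \<approx> u \<star>\<^sub>1 (idc a \<star>\<^sub>0 r \<star>\<^sub>0 idc b) \<star>\<^sub>1 v"
    unfolding red_def by blast
  moreover have "u \<star>\<^sub>1 (idc a \<star>\<^sub>0 x \<star>\<^sub>0 idc b) \<star>\<^sub>1 v = (fst u, snd u @ shift a (snd x) @ snd v)"
    for x
    by (simp add: comp0_def comp1_def idc_def)
  ultimately show thesis using that by metis
qed

fun step_heights :: "gate \<times> nat \<Rightarrow> (nat \<Rightarrow> nat) \<Rightarrow> nat \<Rightarrow> nat" where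
  "step_heights (SWAP, p) h = (let m = Suc (max (h p) (h (Suc p))) in h(p := m, Suc p := m))"
| "step_heights (g, p) h = h"

fun gate_cost :: "gate \<times> nat \<Rightarrow> (nat \<Rightarrow> nat) \<Rightarrow> nat" where
  "gate_cost (SWAP, p) h = 0"
| "gate_cost (NOT, p) h = h p"
| "gate_cost (CNOT, p) h = h p + h (Suc p)"
| "gate_cost (TOFF, p) h = h p + h (Suc p) + h (Suc (Suc p))"

fun run_heights :: "(gate \<times> nat) list \<Rightarrow> (nat \<Rightarrow> nat) \<Rightarrow> nat \<Rightarrow> nat" where
  "run_heights [] h = h"
| "run_heights (x # w) h = run_heights w (step_heights x h)"

fun word_cost :: "(gate \<times> nat) list \<Rightarrow> (nat \<Rightarrow> nat) \<Rightarrow> nat" where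
  "word_cost [] h = 0"
| "word_cost (x # w) h = gate_cost x h + word_cost w (step_heights x h)"

lemma run_heights_append [simp]: "run_heights (w @ w') h = run_heights w' (run_heights w h)"
  by (induction w arbitrary: h) auto

lemma word_cost_append [simp]:
  "word_cost (w @ w') h = word_cost w h + word_cost w' (run_heights w h)"
  by (induction w arbitrary: h) auto

lemma indep_step_heights_commute:
  assumes "indep x y"
  shows "step_heights y (step_heights x h) = step_heights x (step_heights y h)"
    and "gate_cost x h + gate_cost y (step_heights x h) = gate_cost y h + gate_cost x (step_heights y h)"
proof -
  obtain g p g' q where "x = (g, p)" "y = (g', q)" by fastforce
  with assms show "step_heights y (step_heights x h) = step_heights x (step_heights y h)"
    and "gate_cost x h + gate_cost y (step_heights x h) = gate_cost y h + gate_cost x (step_heights y h)"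
    unfolding indep_def by (cases g; cases g'; auto simp: Let_def fun_upd_twist fun_eq_iff)+
qed

lemma word_cost_exch_invariant:
  assumes "indep x y"
  shows "word_cost (u @ [x, y] @ v) h = word_cost (u @ [y, x] @ v) h"
  using indep_step_heights_commute[OF assms, of "run_heights u h"] by simp

definition slides :: "(gate \<times> nat) list \<Rightarrow> (gate \<times> nat) list \<Rightarrow> bool" where
  "slides w w' \<longleftrightarrow> (\<forall>h. run_heights w h = run_heights w' h \<and> word_cost w h < word_cost w' h)"

definition nonswap_count :: "(gate \<times> nat) list \<Rightarrow> nat" where
  "nonswap_count w = length (filter (\<lambda>x. fst x \<noteq> SWAP) w)"

definition swap_count :: "(gate \<times> nat) list \<Rightarrow> nat" where
  "swap_count w = length (filter (\<lambda>x. fst x = SWAP) w)"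

definition swap_distance_sum :: "nat \<Rightarrow> (gate \<times> nat) list \<Rightarrow> nat" where
  "swap_distance_sum n w = sum_list (map (\<lambda>x. if fst x = SWAP then n - snd x else 0) w)"

lemma count_simps [simp]:
  "nonswap_count [] = 0"
  "nonswap_count (x # w) = (if fst x = SWAP then nonswap_count w else Suc (nonswap_count w))"
  "nonswap_count (w @ w') = nonswap_count w + nonswap_count w'"
  "swap_count [] = 0"
  "swap_count (x # w) = (if fst x = SWAP then Suc (swap_count w) else swap_count w)"
  "swap_count (w @ w') = swap_count w + swap_count w'"
  "swap_distance_sum n [] = 0"
  "swap_distance_sum n (x # w) = (if fst x = SWAP then n - snd x else 0) + swap_distance_sum n w"
  "swap_distance_sum n (w @ w') = swap_distance_sum n w + swap_distance_sum n w'"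
  by (simp_all add: nonswap_count_def swap_count_def swap_distance_sum_def)

definition weight :: "circ \<Rightarrow> nat \<times> nat \<times> nat \<times> nat" where
  "weight c = (nonswap_count (snd c), swap_count (snd c), swap_distance_sum (fst c) (snd c),
     word_cost (snd c) (\<lambda>_. 0))"

definition weight_less :: "(circ \<times> circ) set" where
  "weight_less = inv_image (less_than <*lex*> less_than <*lex*> less_than <*lex*> less_than) weight"

lemma wf_weight_less: "wf weight_less"
  unfolding weight_less_def by (intro wf_inv_image wf_lex_prod wf_less_than)

lemma weight_circ_eq:
  assumes "c \<approx> d"
  shows "weight c = weight d"
proof (rule equivclp_invariant[of exch])
  show "equivclp exch c d"
    using assms by (simp add: circ_eq_def)
next
  fix c d
  assume "exch c d"
  then show "weight c = weight d"
  proof cases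
    case (1 x y n u v)
    then show ?thesis
      using word_cost_exch_invariant[OF 1(3), of u v "\<lambda>_. 0"] by (simp add: weight_def)
  qed
qed

lemma weight_less_in_context_of_counts:
  assumes "nonswap_count w < nonswap_count w'
    \<or> nonswap_count w = nonswap_count w' \<and> (swap_count w < swap_count w'
    \<or> swap_count w = swap_count w' \<and> swap_distance_sum n w < swap_distance_sum n w')"
  shows "((n, U @ w @ V), (n, U @ w' @ V)) \<in> weight_less"
  using assms by (auto simp: weight_less_def weight_def)

lemma weight_less_in_context_of_slides:
  assumes "slides w w'" and "nonswap_count w = nonswap_count w'"
    and "swap_count w = swap_count w'" and "swap_distance_sum n w = swap_distance_sum n w'"
  shows "((n, U @ w @ V), (n, U @ w' @ V)) \<in> weight_less"
  using assms by (simp add: slides_def weight_less_def weight_def)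

lemma R3_weight_less_in_context:
  assumes "(l, r) \<in> R3" and "n = a + fst l + b"
  shows "((n, U @ shift a (snd r) @ V), (n, U @ shift a (snd l) @ V)) \<in> weight_less"
  \<comment> \<open>the first five rules lower the counts, the last seven are sliding rules\<close>
  using assms unfolding R3_explicit
  by (elim insertE emptyE; simp only: prod.inject fst_conv snd_conv)
    (rule weight_less_in_context_of_counts; force
     | rule weight_less_in_context_of_slides; auto simp: slides_def Let_def fun_eq_iff)+

lemma red_weight_less:
  assumes "red c d"
  shows "(d, c) \<in> weight_less"
proof -
  obtain l r n a b U V where "(l, r) \<in> R3" "n = a + fst l + b"
    "c \<approx> (n, U @ shift a (snd l) @ V)" "d \<approx> (n, U @ shift a (snd r) @ V)"
    using red_imp_rule_in_context[OF assms] .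
  then show ?thesis
    using R3_weight_less_in_context weight_circ_eq by (simp add: weight_less_def)
qed

theorem mainTheorem7:
  shows "\<not> (\<exists>f :: nat \<Rightarrow> circ. (\<forall>i. wf_circ (f i)) \<and> (\<forall>i. red (f i) (f (Suc i))))"
proof
  assume "\<exists>f :: nat \<Rightarrow> circ. (\<forall>i. wf_circ (f i)) \<and> (\<forall>i. red (f i) (f (Suc i)))"
  then obtain f :: "nat \<Rightarrow> circ" where "\<forall>i. red (f i) (f (Suc i))" by blast
  then have "\<forall>i. (f (Suc i), f i) \<in> weight_less" using red_weight_less by blast
  with wf_weight_less show False using wf_iff_no_infinite_down_chain by blast
qed

end
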